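(* Let $\mathbb{P}$ be the Exponential(1) distribution, $x^1=1$, $C(x)=\frac12x^2$ (so $c(x)=x$), and $\beta\in(0,1)$. Let $\boldsymbol{p}_1,\ldots,\boldsymbol{p}_N$ be i.i.d. samples from $\mathbb{P}$ determining the SDP policy $y_{\mathrm{S}}(x,p)=\bigl(\beta\frac1N\sum_{i=1}^N(\boldsymbol{p}_i-p)_+-(1-\beta)p\bigr)_{[0,x]}$ and the MPC policy $y_{\mathrm{M}}(x,p)=\bigl(\beta(\mu_N-p)_+-(1-\beta)p\bigr)_{[0,x]}$ with $\mu_N=\frac1N\sum_{i=1}^N\boldsymbol{p}_i$. For each $N\ge2$, as $\beta\to1$ the expected out-of-sample performance $\mathbb{E}_{\mathbb{P}^N}[\bar V_{\mathrm{S}}(1;\boldsymbol{p}_1,\ldots,\boldsymbol{p}_N)]$ of SDP is unbounded below, while the expected out-of-sample performance $\mathbb{E}_{\mathbb{P}^N}[\bar V_{\mathrm{M}}(1;\boldsymbol{p}_1,\ldots,\boldsymbol{p}_N)]$ of MPC remains bounded.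
   Context: $(z)_{[a,b]}$ is the projection of $z$ onto $[a,b]$ and $(z)_+=\max\{z,0\}$. For fixed samples $p_1,\ldots,p_N$ and a policy $y$, the out-of-sample value is $\bar V_y(x;p_1,\ldots,p_N)=\mathbb{E}_{\mathbb{P}^\infty}[\sum_{t=1}^\infty\beta^{t-1}(\boldsymbol{p}^t(x^t-x^{t+1})-\frac12(x^{t+1})^2)]$ with $x^1=x$, $x^{t+1}=y(x^t,\boldsymbol{p}^t)$, where $\boldsymbol{p}^1,\boldsymbol{p}^2,\ldots$ are i.i.d. Exponential(1) independent of the samples; $\bar V_{\mathrm{S}},\bar V_{\mathrm{M}}$ are these for $y_{\mathrm{S}},y_{\mathrm{M}}$. "Unbounded below as $\beta\to1$" means the values become arbitrarily negative for $\beta$ sufficiently close to $1$. *)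

theory Defs
  imports "HOL-Probability.Probability"
begin

definition Pexp :: "real measure" where
  "Pexp = density lborel (\<lambda>x. ennreal (exponential_density 1 x))"

definition proj :: "real \<Rightarrow> real \<Rightarrow> real \<Rightarrow> real" where
  "proj a b z = max a (min b z)"

definition pos :: "real \<Rightarrow> real" where
  "pos z = max z 0"

definition yS :: "real \<Rightarrow> nat \<Rightarrow> (nat \<Rightarrow> real) \<Rightarrow> real \<Rightarrow> real \<Rightarrow> real" where
  "yS \<beta> N ps x p =
     proj 0 x (\<beta> * ((1 / real N) * (\<Sum>i<N. pos (ps i - p))) - (1 - \<beta>) * p)"

definition yM :: "real \<Rightarrow> nat \<Rightarrow> (nat \<Rightarrow> real) \<Rightarrow> real \<Rightarrow> real \<Rightarrow> real" where
  "yM \<beta> N ps x p =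
     proj 0 x (\<beta> * pos ((1 / real N) * (\<Sum>i<N. ps i) - p) - (1 - \<beta>) * p)"

text \<open>Inventory trajectory: traj y x \<omega> t is x^(t+1) in the paper's 1-based indexing,
  with prices \<omega> t = p^(t+1).\<close>
primrec traj :: "(real \<Rightarrow> real \<Rightarrow> real) \<Rightarrow> real \<Rightarrow> (nat \<Rightarrow> real) \<Rightarrow> nat \<Rightarrow> real" where
  "traj y x \<omega> 0 = x"
| "traj y x \<omega> (Suc t) = y (traj y x \<omega> t) (\<omega> t)"

definition Vbar :: "real \<Rightarrow> (real \<Rightarrow> real \<Rightarrow> real) \<Rightarrow> real \<Rightarrow> real" where
  "Vbar \<beta> y x = integral\<^sup>L (Pi\<^sub>M UNIV (\<lambda>_::nat. Pexp))
     (\<lambda>\<omega>. \<Sum>t. \<beta> ^ t * (\<omega> t * (traj y x \<omega> t - traj y x \<omega> (Suc t))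
                         - (1/2) * (traj y x \<omega> (Suc t))\<^sup>2))"

definition EVS :: "nat \<Rightarrow> real \<Rightarrow> real" where
  "EVS N \<beta> = integral\<^sup>L (Pi\<^sub>M {..<N} (\<lambda>_. Pexp)) (\<lambda>ps. Vbar \<beta> (yS \<beta> N ps) 1)"

definition EVM :: "nat \<Rightarrow> real \<Rightarrow> real" where
  "EVM N \<beta> = integral\<^sup>L (Pi\<^sub>M {..<N} (\<lambda>_. Pexp)) (\<lambda>ps. Vbar \<beta> (yM \<beta> N ps) 1)"

end

theory Submission
  imports Defs
begin

text \<open>Both policies sell their whole stock as soon as the price exceeds a threshold \<open>T\<close>: for SDP
  the sum of the (positive parts of the) samples, for MPC the positive part of their mean. By
  memorylessness of the exponential prices the revenue is then at most \<open>T + 1\<close>, and the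
  discounted sum of the expected squared stocks is at most \<open>exp T\<close>. For MPC,
  \<open>exp T \<le> \<Prod>i. exp (p\<^sub>i / N)\<close> is integrable when \<open>N \<ge> 2\<close>, which bounds the expected value
  uniformly in \<open>\<beta>\<close>. For SDP, a first sample \<open>p\<^sub>1\<close> makes the policy keep a stock \<open>1 / (4 N)\<close> as
  long as prices stay below \<open>p\<^sub>1 - 1\<close>; for \<open>\<beta>\<close> close to 1 this costs a holding term of order
  \<open>exp p\<^sub>1\<close>, whose expectation over \<open>p\<^sub>1 \<in> (2, L]\<close> grows linearly in \<open>L\<close>.\<close>

section \<open>Integrals over products and series\<close>

lemma nn_integral_PiM_component:
  assumes "prob_space M" "i \<in> I" and [measurable]: "f \<in> borel_measurable M"
  shows "(\<integral>\<^sup>+\<omega>. f (\<omega> i) \<partial>PiM I (\<lambda>_. M)) = (\<integral>\<^sup>+x. f x \<partial>M)"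
proof -
  interpret product_prob_space "\<lambda>_. M" I
    by (intro product_prob_spaceI assms(1))
  have "(\<integral>\<^sup>+x. f x \<partial>M) = (\<integral>\<^sup>+x. f x \<partial>distr (PiM I (\<lambda>_. M)) M (\<lambda>\<omega>. \<omega> i))"
    by (simp add: PiM_component[OF assms(2)])
  also have "\<dots> = (\<integral>\<^sup>+\<omega>. f (\<omega> i) \<partial>PiM I (\<lambda>_. M))"
    using assms(2) by (intro nn_integral_distr measurable_component_singleton) auto
  finally show ?thesis by simp
qed

lemma nn_integral_PiM_prod_components:
  assumes "prob_space M" "finite J" "J \<subseteq> I"
    and [measurable]: "\<And>j. j \<in> J \<Longrightarrow> f j \<in> borel_measurable M"
  shows "(\<integral>\<^sup>+\<omega>. (\<Prod>j\<in>J. f j (\<omega> j)) \<partial>PiM I (\<lambda>_. M)) = (\<Prod>j\<in>J. \<integral>\<^sup>+x. f j x \<partial>M)"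
proof -
  interpret product_prob_space "\<lambda>_. M" I
    by (intro product_prob_spaceI assms(1))
  have [measurable]: "(\<lambda>\<omega>. \<Prod>j\<in>J. f j (\<omega> j)) \<in> borel_measurable (PiM J (\<lambda>_. M))"
    by measurable
  have "(\<integral>\<^sup>+\<omega>. (\<Prod>j\<in>J. f j (\<omega> j)) \<partial>PiM I (\<lambda>_. M))
      = (\<integral>\<^sup>+\<omega>. (\<Prod>j\<in>J. f j (restrict \<omega> J j)) \<partial>PiM I (\<lambda>_. M))"
    by (intro nn_integral_cong prod.cong) auto
  also have "\<dots> = (\<integral>\<^sup>+\<omega>. (\<Prod>j\<in>J. f j (\<omega> j)) \<partial>distr (PiM I (\<lambda>_. M)) (PiM J (\<lambda>_. M)) (\<lambda>\<omega>. restrict \<omega> J))"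
    using assms(2,3) by (subst nn_integral_distr) (auto intro!: measurable_restrict_subset)
  also have "\<dots> = (\<integral>\<^sup>+\<omega>. (\<Prod>j\<in>J. f j (\<omega> j)) \<partial>PiM J (\<lambda>_. M))"
    by (simp add: distr_PiM_restrict_finite[OF assms(2,3)])
  also have "\<dots> = (\<Prod>j\<in>J. \<integral>\<^sup>+x. f j x \<partial>M)"
    using assms(2) by (subst product_nn_integral_prod) auto
  finally show ?thesis .
qed

lemma AE_summable_norm_if_summable_integral_norm:
  fixes f :: "nat \<Rightarrow> 'a \<Rightarrow> 'b::{banach, second_countable_topology}"
  assumes "\<And>i. integrable M (f i)" and "summable (\<lambda>i. \<integral>x. norm (f i x) \<partial>M)"
  shows "AE x in M. summable (\<lambda>i. norm (f i x))"
proof -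
  have "(\<integral>\<^sup>+x. (\<Sum>i. ennreal (norm (f i x))) \<partial>M) = (\<Sum>i. \<integral>\<^sup>+x. ennreal (norm (f i x)) \<partial>M)"
    using assms(1) by (intro nn_integral_suminf) auto
  also have "\<dots> = (\<Sum>i. ennreal (\<integral>x. norm (f i x) \<partial>M))"
    using assms(1) by (intro arg_cong[where f=suminf] ext nn_integral_eq_integral integrable_norm) auto
  also have "\<dots> = ennreal (\<Sum>i. \<integral>x. norm (f i x) \<partial>M)"
    using assms(2) by (intro suminf_ennreal2) auto
  finally have "AE x in M. (\<Sum>i. ennreal (norm (f i x))) \<noteq> \<infinity>"
    using assms(1) by (intro nn_integral_PInf_AE) auto
  then show ?thesis
    by eventually_elim (rule summable_suminf_not_top, auto)
qed

section \<open>The exponential distribution\<close>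

lemma prob_space_Pexp: "prob_space Pexp"
  unfolding Pexp_def by (rule prob_space_exponential_density) simp

lemma sets_Pexp [simp, measurable_cong]: "sets Pexp = sets borel"
  by (simp add: Pexp_def)

lemma space_Pexp [simp]: "space Pexp = UNIV"
  by (simp add: Pexp_def)

lemma distributed_Pexp: "distributed Pexp lborel (\<lambda>x. x) (exponential_density 1)"
  unfolding distributed_def Pexp_def by (auto simp: distr_id2)

lemma AE_Pexp_nonneg: "AE x in Pexp. 0 \<le> x"
  unfolding Pexp_def by (subst AE_density) (auto simp: exponential_density_def intro!: AE_I2)

lemma nn_integral_Pexp:
  "f \<in> borel_measurable borel \<Longrightarrow>
    (\<integral>\<^sup>+x. f x \<partial>Pexp) = (\<integral>\<^sup>+x. ennreal (exponential_density 1 x) * f x \<partial>lborel)"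
  unfolding Pexp_def by (subst nn_integral_density) auto

lemma measure_Pexp_atMost:
  assumes "0 \<le> a"
  shows "measure Pexp {..a} = 1 - exp (- a)"
proof -
  interpret prob_space Pexp by (rule prob_space_Pexp)
  show ?thesis
    using exponential_distributedD_le[OF distributed_Pexp assms] by (simp add: atMost_def)
qed

lemma nn_integral_Pexp_pos: "(\<integral>\<^sup>+x. ennreal (pos x) \<partial>Pexp) = 1"
proof -
  interpret prob_space Pexp by (rule prob_space_Pexp)
  have "integrable Pexp (\<lambda>x. x ^ 1)"
    by (rule erlang_ith_moment_integrable[OF _ distributed_Pexp]) simp
  moreover have "(\<integral>x. x \<partial>Pexp) = 1"
    using exponential_distributed_expectation[OF _ distributed_Pexp] by simp
  ultimately have "(\<integral>\<^sup>+x. ennreal x \<partial>Pexp) = 1"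
    using AE_Pexp_nonneg by (subst nn_integral_eq_integral) auto
  moreover have "(\<integral>\<^sup>+x. ennreal (pos x) \<partial>Pexp) = (\<integral>\<^sup>+x. ennreal x \<partial>Pexp)"
    using AE_Pexp_nonneg by (intro nn_integral_cong_AE) (auto simp: pos_def)
  ultimately show ?thesis by simp
qed

text \<open>Memorylessness: on the event \<open>x > T\<close>, of probability \<open>exp (- T)\<close>, the excess \<open>x - T\<close> is
  again Exp(1)-distributed.\<close>

lemma nn_integral_Pexp_excess:
  assumes T: "0 \<le> T"
  shows "(\<integral>\<^sup>+x. ennreal (pos (x - T)) \<partial>Pexp) = exp (- T)"
proof -
  let ?h = "\<lambda>z. ennreal (exponential_density 1 z) * ennreal (pos (z - T))"
  have "(\<integral>\<^sup>+x. ennreal (pos (x - T)) \<partial>Pexp) = (\<integral>\<^sup>+x. ?h x \<partial>lborel)"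
    by (rule nn_integral_Pexp) (auto simp: pos_def)
  also have "\<dots> = (\<integral>\<^sup>+x. ?h (T + x) \<partial>lborel)"
    by (subst lborel_distr_plus[of T, symmetric], subst nn_integral_distr) (auto simp: pos_def)
  also have "\<dots> = (\<integral>\<^sup>+x. exp (- T) * (ennreal (exponential_density 1 x) * ennreal (pos x)) \<partial>lborel)"
  proof (rule nn_integral_cong)
    fix x :: real
    show "?h (T + x) = exp (- T) * (ennreal (exponential_density 1 x) * ennreal (pos x))"
    proof (cases "0 \<le> x")
      case True
      then have "exponential_density 1 (T + x) = exp (- T) * exponential_density 1 x"
        using T by (simp add: exponential_density_def exp_add[symmetric])
      then show ?thesis using True T by (simp add: ennreal_mult' mult.assoc)
    qed (simp add: pos_def)
  qed
  also have "\<dots> = exp (- T) * (\<integral>\<^sup>+x. ennreal (exponential_density 1 x) * ennreal (pos x) \<partial>lborel)"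
    by (subst nn_integral_cmult) (auto simp: pos_def)
  also have "(\<integral>\<^sup>+x. ennreal (exponential_density 1 x) * ennreal (pos x) \<partial>lborel) = 1"
    using nn_integral_Pexp_pos nn_integral_Pexp[of "\<lambda>x. ennreal (pos x)"] by (simp add: pos_def)
  finally show ?thesis by simp
qed

lemma nn_integral_Pexp_exp_pos:
  assumes r: "0 \<le> r" "r < 1"
  shows "(\<integral>\<^sup>+x. ennreal (exp (r * pos x)) \<partial>Pexp) = 1 / (1 - r)"
proof -
  define l where "l = 1 - r"
  have l: "0 < l" using r by (simp add: l_def)
  have "(\<integral>\<^sup>+x. ennreal (exp (r * pos x)) \<partial>Pexp)
      = (\<integral>\<^sup>+x. ennreal (exponential_density 1 x) * ennreal (exp (r * pos x)) \<partial>lborel)"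
    by (rule nn_integral_Pexp) (auto simp: pos_def)
  also have "\<dots> = (\<integral>\<^sup>+x. ennreal (1 / l) * ennreal (exponential_density l x) \<partial>lborel)"
  proof (rule nn_integral_cong)
    fix x :: real
    show "ennreal (exponential_density 1 x) * ennreal (exp (r * pos x))
        = ennreal (1 / l) * ennreal (exponential_density l x)"
    proof (cases "0 \<le> x")
      case True
      have "exponential_density 1 x * exp (r * pos x) = 1 / l * exponential_density l x"
        using True l by (simp add: exponential_density_def pos_def exp_add[symmetric] l_def field_simps)
      then show ?thesis
        using True l by (simp add: ennreal_mult'[symmetric] exponential_density_nonneg)
    qed (simp add: exponential_density_def)
  qed
  also have "\<dots> = ennreal (1 / l) * emeasure (density lborel (exponential_density l)) UNIV"
    by (subst nn_integral_cmult) (auto simp: emeasure_density)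
  also have "emeasure (density lborel (exponential_density l)) UNIV = 1"
    using prob_space.emeasure_space_1[OF prob_space_exponential_density[OF l]] by simp
  finally show ?thesis by (simp add: l_def)
qed

lemma nn_integral_Pexp_exp_indicator:
  assumes "0 \<le> a" "a \<le> b"
  shows "(\<integral>\<^sup>+x. ennreal (exp x * indicator {a<..b} x) \<partial>Pexp) = b - a"
proof -
  have "(\<integral>\<^sup>+x. ennreal (exp x * indicator {a<..b} x) \<partial>Pexp)
      = (\<integral>\<^sup>+x. ennreal (exponential_density 1 x) * ennreal (exp x * indicator {a<..b} x) \<partial>lborel)"
    by (rule nn_integral_Pexp) simp
  also have "\<dots> = (\<integral>\<^sup>+x. indicator {a<..b} x \<partial>lborel)"
    using assms
    by (intro nn_integral_cong)
       (auto simp: exponential_density_def indicator_def ennreal_mult'[symmetric] mult_exp_exp)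
  also have "\<dots> = b - a"
    using assms by simp
  finally show ?thesis .
qed

definition feasible_policy :: "(real \<Rightarrow> real \<Rightarrow> real) \<Rightarrow> bool" where
  "feasible_policy y \<longleftrightarrow> (\<forall>x p. 0 \<le> x \<longrightarrow> 0 \<le> y x p \<and> y x p \<le> x)"

lemma traj_bounds:
  assumes "feasible_policy y" "0 \<le> x"
  shows "0 \<le> traj y x \<omega> t \<and> traj y x \<omega> t \<le> x"
  using assms by (induction t) (auto simp: feasible_policy_def intro: order_trans)

lemma traj_Suc_le:
  assumes "feasible_policy y" "0 \<le> x"
  shows "traj y x \<omega> (Suc t) \<le> traj y x \<omega> t"
  using traj_bounds[OF assms, of \<omega> t] assms(1) by (simp add: feasible_policy_def)

lemma traj_le_if_sells_off:
  assumes "feasible_policy y" "0 \<le> x" and sells_off: "\<And>x p. 0 \<le> x \<Longrightarrow> T < p \<Longrightarrow> y x p = 0"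
  shows "traj y x \<omega> t \<le> x * (\<Prod>s<t. indicator {..T} (\<omega> s))"
proof (induction t)
  case (Suc t)
  show ?case
  proof (cases "\<omega> t \<le> T")
    case True
    then show ?thesis
      using Suc traj_Suc_le[OF assms(1,2), of \<omega> t] by (simp add: mult.commute)
  next
    case False
    then show ?thesis
      using sells_off traj_bounds[OF assms(1,2)] by simp
  qed
qed simp

lemma traj_ge_if_keeps:
  assumes "feasible_policy y" "0 \<le> c" "c \<le> x" and keeps: "\<And>x p. c \<le> x \<Longrightarrow> p \<le> a \<Longrightarrow> c \<le> y x p"
  shows "c * (\<Prod>s<t. indicator {..a} (\<omega> s)) \<le> traj y x \<omega> t"
proof (induction t)
  case (Suc t)
  show ?case
  proof (cases "\<forall>s<Suc t. \<omega> s \<le> a")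
    case True
    then have "c \<le> traj y x \<omega> t"
      using Suc by (simp add: indicator_def)
    then show ?thesis
      using keeps True by (simp add: indicator_def less_Suc_eq)
  next
    case False
    then obtain s where "s < Suc t" "a < \<omega> s"
      by auto
    then have "(\<Prod>s<Suc t. indicator {..a} (\<omega> s)) = (0::real)"
      by (intro prod_zero bexI[of _ s]) auto
    moreover have "0 \<le> traj y x \<omega> (Suc t)"
      using traj_bounds[OF assms(1)] assms(2,3) by (meson order_trans)
    ultimately show ?thesis
      by (metis mult_zero_right)
  qed
qed (use assms in simp)

section \<open>I.i.d. exponential prices\<close>

abbreviation Prices :: "(nat \<Rightarrow> real) measure" where
  "Prices \<equiv> PiM UNIV (\<lambda>_::nat. Pexp)"

lemma prob_space_Prices: "prob_space Prices"
  by (intro prob_space_PiM prob_space_Pexp)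

lemma measurable_traj [measurable]:
  assumes [measurable]: "case_prod y \<in> borel_measurable (borel \<Otimes>\<^sub>M borel)"
  shows "(\<lambda>\<omega>. traj y x \<omega> t) \<in> borel_measurable Prices"
  by (induction t) auto

lemma
  shows integrable_abs_price: "integrable Prices (\<lambda>\<omega>. \<bar>\<omega> t\<bar>)"
    and integral_abs_price: "(\<integral>\<omega>. \<bar>\<omega> t\<bar> \<partial>Prices) = 1"
proof -
  have "(\<integral>\<^sup>+\<omega>. ennreal \<bar>\<omega> t\<bar> \<partial>Prices) = (\<integral>\<^sup>+x. ennreal \<bar>x\<bar> \<partial>Pexp)"
    by (intro nn_integral_PiM_component prob_space_Pexp) auto
  also have "\<dots> = (\<integral>\<^sup>+x. ennreal (pos x) \<partial>Pexp)"
    using AE_Pexp_nonneg by (intro nn_integral_cong_AE) (auto simp: pos_def)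
  finally have "(\<integral>\<^sup>+\<omega>. ennreal \<bar>\<omega> t\<bar> \<partial>Prices) = ennreal 1"
    by (simp add: nn_integral_Pexp_pos)
  then have "integrable Prices (\<lambda>\<omega>. \<bar>\<omega> t\<bar>) \<and> (\<integral>\<omega>. \<bar>\<omega> t\<bar> \<partial>Prices) = 1"
    by (subst (asm) nn_integral_eq_integrable) auto
  then show "integrable Prices (\<lambda>\<omega>. \<bar>\<omega> t\<bar>)" "(\<integral>\<omega>. \<bar>\<omega> t\<bar> \<partial>Prices) = 1"
    by auto
qed

lemma integrable_price: "integrable Prices (\<lambda>\<omega>. \<omega> t)"
  using integrable_abs_price[of t] by (subst (asm) integrable_abs_iff) auto

lemma AE_price_nonneg: "AE \<omega> in Prices. 0 \<le> \<omega> t"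
proof -
  interpret product_prob_space "\<lambda>_::nat. Pexp" UNIV
    by (intro product_prob_spaceI prob_space_Pexp)
  show ?thesis
    by (rule AE_component) (auto simp: AE_Pexp_nonneg)
qed

lemma prod_indicator_lessThan:
  fixes \<omega> :: "nat \<Rightarrow> 'a"
  shows "(\<Prod>s<n. indicator A (\<omega> s) :: real) = indicator {\<omega>. \<forall>s<n. \<omega> s \<in> A} \<omega>"
  by (induction n) (auto simp: indicator_def less_Suc_eq)

lemma
  assumes "A \<in> sets borel"
  shows integrable_prod_indicator_prices: "integrable Prices (\<lambda>\<omega>. \<Prod>s<n. indicator A (\<omega> s) :: real)"
    and integral_prod_indicator_prices: "(\<integral>\<omega>. (\<Prod>s<n. indicator A (\<omega> s)) \<partial>Prices) = measure Pexp A ^ n"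
proof -
  interpret prob_space Pexp by (rule prob_space_Pexp)
  have "(\<integral>\<^sup>+\<omega>. ennreal (\<Prod>s<n. indicator A (\<omega> s)) \<partial>Prices)
      = (\<integral>\<^sup>+\<omega>. (\<Prod>s<n. ennreal (indicator A (\<omega> s))) \<partial>Prices)"
    by (simp add: prod_ennreal)
  also have "\<dots> = (\<Prod>s<n. \<integral>\<^sup>+z. ennreal (indicator A z) \<partial>Pexp)"
    using assms by (intro nn_integral_PiM_prod_components prob_space_Pexp) auto
  also have "\<dots> = ennreal (measure Pexp A ^ n)"
    using assms by (simp add: ennreal_indicator emeasure_eq_measure prod_ennreal ennreal_power)
  finally have "integrable Prices (\<lambda>\<omega>. \<Prod>s<n. indicator A (\<omega> s) :: real)
      \<and> (\<integral>\<omega>. (\<Prod>s<n. indicator A (\<omega> s)) \<partial>Prices) = measure Pexp A ^ n"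
    using assms by (subst (asm) nn_integral_eq_integrable) (auto intro!: prod_nonneg)
  then show "integrable Prices (\<lambda>\<omega>. \<Prod>s<n. indicator A (\<omega> s) :: real)"
    and "(\<integral>\<omega>. (\<Prod>s<n. indicator A (\<omega> s)) \<partial>Prices) = measure Pexp A ^ n"
    by auto
qed

lemma
  assumes "0 \<le> T"
  shows integrable_excess_after_low_prices: "integrable Prices (\<lambda>\<omega>. pos (\<omega> t - T) * (\<Prod>s<t. indicator {..T} (\<omega> s)))"
    and integral_excess_after_low_prices:
      "(\<integral>\<omega>. pos (\<omega> t - T) * (\<Prod>s<t. indicator {..T} (\<omega> s)) \<partial>Prices)
        = exp (- T) * (1 - exp (- T)) ^ t"
proof -
  interpret prob_space Pexp by (rule prob_space_Pexp)
  define F where "F s z = (if s < t then ennreal (indicator {..T} z) else ennreal (pos (z - T)))" for s z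
  have [measurable]: "F s \<in> borel_measurable Pexp" for s
    unfolding F_def pos_def by measurable
  have "(\<integral>\<^sup>+\<omega>. ennreal (pos (\<omega> t - T) * (\<Prod>s<t. indicator {..T} (\<omega> s))) \<partial>Prices)
      = (\<integral>\<^sup>+\<omega>. (\<Prod>s<Suc t. F s (\<omega> s)) \<partial>Prices)"
  proof (intro nn_integral_cong)
    fix \<omega> :: "nat \<Rightarrow> real"
    have "(\<Prod>s<t. F s (\<omega> s)) = (\<Prod>s<t. ennreal (indicator {..T} (\<omega> s)))"
      by (intro prod.cong) (auto simp: F_def)
    then show "ennreal (pos (\<omega> t - T) * (\<Prod>s<t. indicator {..T} (\<omega> s))) = (\<Prod>s<Suc t. F s (\<omega> s))"
      by (simp add: F_def prod_ennreal ennreal_mult' pos_def mult.commute)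
  qed
  also have "\<dots> = (\<Prod>s<Suc t. \<integral>\<^sup>+z. F s z \<partial>Pexp)"
    by (intro nn_integral_PiM_prod_components prob_space_Pexp) auto
  also have "\<dots> = (\<Prod>s<t. \<integral>\<^sup>+z. F s z \<partial>Pexp) * ennreal (exp (- T))"
    using assms by (simp add: F_def nn_integral_Pexp_excess)
  also have "(\<Prod>s<t. \<integral>\<^sup>+z. F s z \<partial>Pexp) = (\<Prod>s<t. ennreal (1 - exp (- T)))"
    using assms
    by (intro prod.cong) (auto simp: F_def ennreal_indicator emeasure_eq_measure measure_Pexp_atMost)
  also have "\<dots> * ennreal (exp (- T)) = ennreal (exp (- T) * (1 - exp (- T)) ^ t)"
    using assms by (simp add: ennreal_power mult.commute flip: ennreal_mult)
  finally have "integrable Prices (\<lambda>\<omega>. pos (\<omega> t - T) * (\<Prod>s<t. indicator {..T} (\<omega> s)))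
      \<and> (\<integral>\<omega>. pos (\<omega> t - T) * (\<Prod>s<t. indicator {..T} (\<omega> s)) \<partial>Prices)
        = exp (- T) * (1 - exp (- T)) ^ t"
    using assms
    by (subst (asm) nn_integral_eq_integrable) (auto simp: pos_def intro!: AE_I2 mult_nonneg_nonneg prod_nonneg)
  then show "integrable Prices (\<lambda>\<omega>. pos (\<omega> t - T) * (\<Prod>s<t. indicator {..T} (\<omega> s)))"
    and "(\<integral>\<omega>. pos (\<omega> t - T) * (\<Prod>s<t. indicator {..T} (\<omega> s)) \<partial>Prices)
      = exp (- T) * (1 - exp (- T)) ^ t"
    by auto
qed

section \<open>The value of a policy\<close>

lemma exp_div_4_le_discounted_ratio:
  fixes a \<beta> :: real
  assumes "1 \<le> a" "0 \<le> \<beta>" "\<beta> < 1" "1 - \<beta> \<le> exp (- a)"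
  shows "exp a / 4 \<le> (1 - exp (- a)) / (1 - \<beta> * (1 - exp (- a)))"
proof -
  define e where "e = exp (- a)"
  have "0 < e" by (simp add: e_def)
  have "exp (- 1) \<le> (1 / 2 :: real)"
    using exp_ge_add_one_self[of 1] by (simp add: exp_minus field_simps)
  moreover have "e \<le> exp (- 1)"
    unfolding e_def using assms(1) by simp
  ultimately have "e \<le> 1 / 2"
    by linarith
  have "1 - \<beta> * (1 - e) = (1 - \<beta>) + \<beta> * e"
    by (simp add: algebra_simps)
  also have "\<dots> \<le> 2 * e"
  proof -
    have "\<beta> * e \<le> e"
      using assms(2,3) \<open>0 < e\<close> by (intro mult_left_le_one_le) auto
    moreover have "1 - \<beta> \<le> e"
      using assms(4) by (simp add: e_def)
    ultimately show ?thesis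
      by linarith
  qed
  finally have denominator: "1 - \<beta> * (1 - e) \<le> 2 * e" .
  have "\<beta> * (1 - e) \<le> 1 - e"
    using assms(2,3) \<open>e \<le> 1 / 2\<close> by (intro mult_left_le_one_le) auto
  then have "0 < 1 - \<beta> * (1 - e)"
    using \<open>0 < e\<close> by linarith
  have "exp a / 4 = (1 / 2) / (2 * e)"
    by (simp add: e_def exp_minus field_simps)
  also have "\<dots> \<le> (1 - e) / (2 * e)"
    using \<open>e \<le> 1 / 2\<close> \<open>0 < e\<close> by (intro divide_right_mono) auto
  also have "\<dots> \<le> (1 - e) / (1 - \<beta> * (1 - e))"
    using \<open>e \<le> 1 / 2\<close> denominator \<open>0 < 1 - \<beta> * (1 - e)\<close> by (intro divide_left_mono) auto
  finally show ?thesis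
    unfolding e_def .
qed

declare traj.simps(2) [simp del]

locale discounted_policy =
  fixes y :: "real \<Rightarrow> real \<Rightarrow> real" and x \<beta> :: real
  assumes feasible: "feasible_policy y"
    and measurable_policy [measurable]: "case_prod y \<in> borel_measurable (borel \<Otimes>\<^sub>M borel)"
    and x_nonneg: "0 \<le> x" and x_le_1: "x \<le> 1"
    and \<beta>_nonneg: "0 \<le> \<beta>" and \<beta>_less_1: "\<beta> < 1"
begin

abbreviation stock :: "(nat \<Rightarrow> real) \<Rightarrow> nat \<Rightarrow> real" where
  "stock \<equiv> traj y x"

definition sales :: "nat \<Rightarrow> real" where
  "sales t = (\<integral>\<omega>. stock \<omega> t - stock \<omega> (Suc t) \<partial>Prices)"

definition revenue :: "nat \<Rightarrow> real" where
  "revenue t = (\<integral>\<omega>. \<omega> t * (stock \<omega> t - stock \<omega> (Suc t)) \<partial>Prices)"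

definition stock_sq :: "nat \<Rightarrow> real" where
  "stock_sq t = (\<integral>\<omega>. (stock \<omega> (Suc t))\<^sup>2 \<partial>Prices)"

definition holding :: real where
  "holding = (\<Sum>t. \<beta> ^ t * stock_sq t)"

lemma stock_nonneg: "0 \<le> stock \<omega> t"
  and stock_le_1: "stock \<omega> t \<le> 1"
  using traj_bounds[OF feasible x_nonneg, of \<omega> t] x_le_1 by auto

lemma sold_nonneg: "0 \<le> stock \<omega> t - stock \<omega> (Suc t)"
  using traj_Suc_le[OF feasible x_nonneg] by simp

lemma sold_le_1: "stock \<omega> t - stock \<omega> (Suc t) \<le> 1"
  using stock_nonneg[of \<omega> "Suc t"] stock_le_1[of \<omega> t] by simp

lemma power2_stock_le_1: "(stock \<omega> t)\<^sup>2 \<le> 1"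
  using stock_nonneg stock_le_1 by (simp add: power_le_one)

lemma integrable_stock: "integrable Prices (\<lambda>\<omega>. stock \<omega> t)"
proof -
  interpret prob_space Prices by (rule prob_space_Prices)
  show ?thesis
    using stock_nonneg stock_le_1 by (intro integrable_const_bound[where B=1]) auto
qed

lemma integrable_stock_sq: "integrable Prices (\<lambda>\<omega>. (stock \<omega> t)\<^sup>2)"
proof -
  interpret prob_space Prices by (rule prob_space_Prices)
  show ?thesis
    using power2_stock_le_1 by (intro integrable_const_bound[where B=1]) auto
qed

lemma integrable_revenue: "integrable Prices (\<lambda>\<omega>. \<omega> t * (stock \<omega> t - stock \<omega> (Suc t)))"
proof (rule Bochner_Integration.integrable_bound[OF integrable_price[of t]])
  show "AE \<omega> in Prices. norm (\<omega> t * (stock \<omega> t - stock \<omega> (Suc t))) \<le> norm (\<omega> t)"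
    using sold_nonneg sold_le_1 by (intro AE_I2) (simp add: abs_mult mult_left_le)
qed auto

lemma sales_nonneg: "0 \<le> sales t"
  unfolding sales_def using sold_nonneg by (intro integral_nonneg_AE AE_I2) auto

lemma
  shows summable_sales: "summable sales"
    and suminf_sales_le: "(\<Sum>t. sales t) \<le> x"
proof -
  interpret prob_space Prices by (rule prob_space_Prices)
  have telescope: "(\<Sum>t<n. sales t) = x - (\<integral>\<omega>. stock \<omega> n \<partial>Prices)" for n
  proof -
    have "(\<Sum>t<n. sales t) = (\<Sum>t<n. (\<integral>\<omega>. stock \<omega> t \<partial>Prices) - (\<integral>\<omega>. stock \<omega> (Suc t) \<partial>Prices))"
      unfolding sales_def using integrable_stock by (intro sum.cong) auto
    also have "\<dots> = (\<integral>\<omega>. stock \<omega> 0 \<partial>Prices) - (\<integral>\<omega>. stock \<omega> n \<partial>Prices)"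
      by (rule sum_lessThan_telescope')
    finally show ?thesis
      by (simp add: prob_space)
  qed
  have stock_integral_nonneg: "0 \<le> (\<integral>\<omega>. stock \<omega> n \<partial>Prices)" for n
    using stock_nonneg by (intro integral_nonneg_AE AE_I2) auto
  have partial: "(\<Sum>t<n. sales t) \<le> x" for n
    using telescope[of n] stock_integral_nonneg[of n] by linarith
  show "summable sales"
    by (rule summableI_nonneg_bounded[OF sales_nonneg partial])
  show "(\<Sum>t. sales t) \<le> x"
    by (rule suminf_le_const[OF \<open>summable sales\<close> partial])
qed

lemma revenue_nonneg: "0 \<le> revenue t"
  unfolding revenue_def using AE_price_nonneg[of t]
  by (intro integral_nonneg_AE) (auto elim!: eventually_mono intro!: mult_nonneg_nonneg sold_nonneg)

lemma revenue_le_1: "revenue t \<le> 1"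
proof -
  have "revenue t \<le> (\<integral>\<omega>. \<bar>\<omega> t\<bar> \<partial>Prices)"
    unfolding revenue_def
  proof (rule integral_mono[OF integrable_revenue integrable_abs_price])
    fix \<omega> :: "nat \<Rightarrow> real"
    show "\<omega> t * (stock \<omega> t - stock \<omega> (Suc t)) \<le> \<bar>\<omega> t\<bar>"
      using mult_right_mono[OF abs_ge_self sold_nonneg] mult_left_le[OF sold_le_1 abs_ge_zero]
      by (rule order_trans)
  qed
  then show ?thesis
    by (simp add: integral_abs_price)
qed

lemma stock_sq_nonneg: "0 \<le> stock_sq t"
  unfolding stock_sq_def by simp

lemma stock_sq_le_1: "stock_sq t \<le> 1"
proof -
  interpret prob_space Prices by (rule prob_space_Prices)
  have "stock_sq t \<le> (\<integral>\<omega>. 1 \<partial>Prices)"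
    unfolding stock_sq_def using power2_stock_le_1
    by (intro integral_mono integrable_stock_sq) auto
  then show ?thesis
    by (simp add: prob_space)
qed

lemma discount_le: "0 \<le> a \<Longrightarrow> \<beta> ^ t * a \<le> a"
  using \<beta>_nonneg \<beta>_less_1 by (intro mult_left_le_one_le) (auto intro: power_le_one)

lemma summable_discounted:
  assumes "\<And>t. 0 \<le> f t" "\<And>t. f t \<le> 1"
  shows "summable (\<lambda>t. \<beta> ^ t * f t)"
  using assms \<beta>_nonneg \<beta>_less_1
  by (intro summable_comparison_test[OF _ summable_geometric[of \<beta>]])
     (auto intro!: exI[of _ 0] mult_left_le simp: abs_mult)

lemma summable_revenue: "summable (\<lambda>t. \<beta> ^ t * revenue t)"
  by (rule summable_discounted[OF revenue_nonneg revenue_le_1])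

lemma summable_stock_sq: "summable (\<lambda>t. \<beta> ^ t * stock_sq t)"
  by (rule summable_discounted[OF stock_sq_nonneg stock_sq_le_1])

lemma holding_nonneg: "0 \<le> holding"
  unfolding holding_def using \<beta>_nonneg
  by (intro suminf_nonneg summable_stock_sq mult_nonneg_nonneg stock_sq_nonneg) auto

lemma holding_le: "holding \<le> 1 / (1 - \<beta>)"
proof -
  have "holding \<le> (\<Sum>t. \<beta> ^ t)"
    unfolding holding_def using \<beta>_nonneg \<beta>_less_1 stock_sq_le_1
    by (intro suminf_le summable_stock_sq summable_geometric mult_left_le) auto
  then show ?thesis
    using \<beta>_nonneg \<beta>_less_1 by (simp add: suminf_geometric)
qed

definition reward :: "nat \<Rightarrow> (nat \<Rightarrow> real) \<Rightarrow> real" where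
  "reward t \<omega> = \<omega> t * (stock \<omega> t - stock \<omega> (Suc t)) - 1/2 * (stock \<omega> (Suc t))\<^sup>2"

lemma abs_reward_le: "\<bar>reward t \<omega>\<bar> \<le> \<bar>\<omega> t\<bar> + 1/2"
proof -
  have "\<bar>\<omega> t * (stock \<omega> t - stock \<omega> (Suc t))\<bar> \<le> \<bar>\<omega> t\<bar>"
    using sold_nonneg sold_le_1 by (simp add: abs_mult mult_left_le)
  then show ?thesis
    unfolding reward_def using power2_stock_le_1[of \<omega> "Suc t"] zero_le_power2[of "stock \<omega> (Suc t)"]
    by linarith
qed

lemma integrable_reward: "integrable Prices (reward t)"
  unfolding reward_def[abs_def] using integrable_revenue integrable_stock_sq by auto

lemma integral_reward: "(\<integral>\<omega>. reward t \<omega> \<partial>Prices) = revenue t - stock_sq t / 2"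
  unfolding reward_def revenue_def stock_sq_def
  using integrable_revenue[of t] integrable_stock_sq[of "Suc t"] by simp

lemma summable_integral_discounted_reward: "summable (\<lambda>t. \<integral>\<omega>. norm (\<beta> ^ t * reward t \<omega>) \<partial>Prices)"
proof (rule summable_comparison_test)
  interpret prob_space Prices by (rule prob_space_Prices)
  show "summable (\<lambda>t. 3/2 * \<beta> ^ t)"
    using \<beta>_nonneg \<beta>_less_1 by (intro summable_mult summable_geometric) auto
  have "(\<integral>\<omega>. norm (\<beta> ^ t * reward t \<omega>) \<partial>Prices) \<le> (\<integral>\<omega>. \<beta> ^ t * (\<bar>\<omega> t\<bar> + 1/2) \<partial>Prices)" for t
    using integrable_reward integrable_abs_price abs_reward_le \<beta>_nonneg
    by (intro integral_mono) (auto simp: abs_mult intro!: mult_left_mono)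
  also have "\<dots> t = 3/2 * \<beta> ^ t" for t
    using integrable_abs_price integral_abs_price by (simp add: prob_space)
  finally show "\<exists>N. \<forall>t\<ge>N. norm (\<integral>\<omega>. norm (\<beta> ^ t * reward t \<omega>) \<partial>Prices) \<le> 3/2 * \<beta> ^ t"
    by auto
qed

lemma Vbar_eq: "Vbar \<beta> y x = (\<Sum>t. \<beta> ^ t * revenue t) - holding / 2"
proof -
  have "(\<lambda>t. \<integral>\<omega>. \<beta> ^ t * reward t \<omega> \<partial>Prices) sums (\<integral>\<omega>. (\<Sum>t. \<beta> ^ t * reward t \<omega>) \<partial>Prices)"
    using integrable_reward summable_integral_discounted_reward
    by (intro sums_integral AE_summable_norm_if_summable_integral_norm) auto
  moreover have "(\<integral>\<omega>. (\<Sum>t. \<beta> ^ t * reward t \<omega>) \<partial>Prices) = Vbar \<beta> y x"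
    unfolding Vbar_def reward_def by simp
  ultimately have "(\<lambda>t. \<beta> ^ t * (revenue t - stock_sq t / 2)) sums Vbar \<beta> y x"
    by (simp add: integral_reward)
  moreover have "(\<lambda>t. \<beta> ^ t * (revenue t - stock_sq t / 2)) sums ((\<Sum>t. \<beta> ^ t * revenue t) - holding / 2)"
    unfolding holding_def right_diff_distrib times_divide_eq_right
    by (intro sums_diff sums_divide summable_sums summable_revenue summable_stock_sq)
  ultimately show ?thesis
    by (rule sums_unique2)
qed

lemma Vbar_ge: "- holding / 2 \<le> Vbar \<beta> y x"
  using Vbar_eq suminf_nonneg[OF summable_revenue] revenue_nonneg \<beta>_nonneg by simp

lemma stock_sq_ge:
  assumes "0 \<le> c" "c \<le> x" "0 \<le> a" and keeps: "\<And>x' p. c \<le> x' \<Longrightarrow> p \<le> a \<Longrightarrow> c \<le> y x' p"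
  shows "c\<^sup>2 * (1 - exp (- a)) ^ Suc t \<le> stock_sq t"
proof -
  let ?P = "\<lambda>\<omega>. \<Prod>s<Suc t. indicator {..a} (\<omega> s) :: real"
  have "c\<^sup>2 * (1 - exp (- a)) ^ Suc t = (\<integral>\<omega>. c\<^sup>2 * ?P \<omega> \<partial>Prices)"
    using integral_prod_indicator_prices[of "{..a}" "Suc t"] measure_Pexp_atMost[OF assms(3)]
    by simp
  also have "\<dots> \<le> stock_sq t"
    unfolding stock_sq_def
  proof (rule integral_mono)
    show "integrable Prices (\<lambda>\<omega>. c\<^sup>2 * ?P \<omega>)"
      by (intro integrable_mult_right integrable_prod_indicator_prices) simp
    show "integrable Prices (\<lambda>\<omega>. (stock \<omega> (Suc t))\<^sup>2)"
      by (rule integrable_stock_sq)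
    fix \<omega> :: "nat \<Rightarrow> real"
    have "c * ?P \<omega> \<le> stock \<omega> (Suc t)"
      by (rule traj_ge_if_keeps[OF feasible assms(1,2) keeps])
    moreover have "0 \<le> c * ?P \<omega>"
      using assms(1) by (intro mult_nonneg_nonneg prod_nonneg) auto
    ultimately have "(c * ?P \<omega>)\<^sup>2 \<le> (stock \<omega> (Suc t))\<^sup>2"
      by (rule power_mono)
    moreover have "(c * ?P \<omega>)\<^sup>2 = c\<^sup>2 * ?P \<omega>"
      unfolding prod_indicator_lessThan by (simp add: power_mult_distrib indicator_def)
    ultimately show "c\<^sup>2 * ?P \<omega> \<le> (stock \<omega> (Suc t))\<^sup>2"
      by simp
  qed
  finally show ?thesis .
qed

lemma holding_ge:
  assumes "0 \<le> c" "c \<le> x" "0 \<le> a" and keeps: "\<And>x' p. c \<le> x' \<Longrightarrow> p \<le> a \<Longrightarrow> c \<le> y x' p"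
  shows "c\<^sup>2 * (1 - exp (- a)) / (1 - \<beta> * (1 - exp (- a))) \<le> holding"
proof -
  define q where "q = 1 - exp (- a)"
  have q: "0 \<le> q" "q < 1"
    using assms(3) by (auto simp: q_def)
  have "0 \<le> \<beta> * q" "\<beta> * q < 1"
    using q \<beta>_nonneg \<beta>_less_1 mult_left_le_one_le[of q \<beta>] by auto
  then have "(\<lambda>t. c\<^sup>2 * q * (\<beta> * q) ^ t) sums (c\<^sup>2 * q * (1 / (1 - \<beta> * q)))"
    by (intro sums_mult geometric_sums) simp
  moreover have "c\<^sup>2 * q * (\<beta> * q) ^ t \<le> \<beta> ^ t * stock_sq t" for t
  proof -
    have "c\<^sup>2 * q * (\<beta> * q) ^ t = \<beta> ^ t * (c\<^sup>2 * q ^ Suc t)"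
      by (simp add: power_mult_distrib)
    also have "\<dots> \<le> \<beta> ^ t * stock_sq t"
      using stock_sq_ge[OF assms] \<beta>_nonneg by (intro mult_left_mono) (auto simp: q_def)
    finally show ?thesis .
  qed
  ultimately have "c\<^sup>2 * q * (1 / (1 - \<beta> * q)) \<le> holding"
    unfolding holding_def by (intro sums_le[OF _ _ summable_sums[OF summable_stock_sq]])
  then show ?thesis
    by (simp add: q_def)
qed

lemma holding_ge_exp:
  assumes "0 \<le> c" "c \<le> x" "1 \<le> a" "1 - \<beta> \<le> exp (- a)"
    and keeps: "\<And>x' p. c \<le> x' \<Longrightarrow> p \<le> a \<Longrightarrow> c \<le> y x' p"
  shows "c\<^sup>2 * exp a / 4 \<le> holding"
proof -
  have "c\<^sup>2 * (exp a / 4) \<le> c\<^sup>2 * ((1 - exp (- a)) / (1 - \<beta> * (1 - exp (- a))))"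
    using exp_div_4_le_discounted_ratio[OF assms(3) \<beta>_nonneg \<beta>_less_1 assms(4)]
    by (intro mult_left_mono) auto
  also have "\<dots> \<le> holding"
    using holding_ge[OF assms(1,2) _ keeps] assms(3) by simp
  finally show ?thesis
    by simp
qed

end

locale sell_off_policy = discounted_policy +
  fixes T :: real
  assumes T_nonneg: "0 \<le> T"
    and sells_off: "\<And>x' p. 0 \<le> x' \<Longrightarrow> T < p \<Longrightarrow> y x' p = 0"
begin

lemma stock_le_prod_indicator: "stock \<omega> t \<le> (\<Prod>s<t. indicator {..T} (\<omega> s))"
proof -
  have "stock \<omega> t \<le> x * (\<Prod>s<t. indicator {..T} (\<omega> s))"
    by (rule traj_le_if_sells_off[OF feasible x_nonneg sells_off])
  also have "\<dots> \<le> (\<Prod>s<t. indicator {..T} (\<omega> s))"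
    using x_nonneg x_le_1 by (intro mult_left_le_one_le prod_nonneg) auto
  finally show ?thesis .
qed

text \<open>A price above \<open>T\<close> earns its excess over \<open>T\<close> only on stock still held, hence only if all
  earlier prices stayed below \<open>T\<close>.\<close>

lemma revenue_le: "revenue t \<le> T * sales t + exp (- T) * (1 - exp (- T)) ^ t"
proof -
  let ?P = "\<lambda>\<omega>. \<Prod>s<t. indicator {..T} (\<omega> s) :: real"
  have "revenue t \<le> (\<integral>\<omega>. T * (stock \<omega> t - stock \<omega> (Suc t)) + pos (\<omega> t - T) * ?P \<omega> \<partial>Prices)"
    unfolding revenue_def
  proof (rule integral_mono[OF integrable_revenue])
    show "integrable Prices (\<lambda>\<omega>. T * (stock \<omega> t - stock \<omega> (Suc t)) + pos (\<omega> t - T) * ?P \<omega>)"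
      using integrable_stock integrable_excess_after_low_prices[OF T_nonneg] by auto
    fix \<omega> :: "nat \<Rightarrow> real"
    have "\<omega> t * (stock \<omega> t - stock \<omega> (Suc t))
        \<le> (T + pos (\<omega> t - T)) * (stock \<omega> t - stock \<omega> (Suc t))"
      using sold_nonneg by (intro mult_right_mono) (auto simp: pos_def)
    also have "\<dots> \<le> T * (stock \<omega> t - stock \<omega> (Suc t)) + pos (\<omega> t - T) * ?P \<omega>"
      using stock_le_prod_indicator[of \<omega> t] stock_nonneg[of \<omega> "Suc t"]
      by (simp add: distrib_right mult_left_mono pos_def)
    finally show "\<omega> t * (stock \<omega> t - stock \<omega> (Suc t))
        \<le> T * (stock \<omega> t - stock \<omega> (Suc t)) + pos (\<omega> t - T) * ?P \<omega>" .
  qed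
  also have "\<dots> = T * sales t + exp (- T) * (1 - exp (- T)) ^ t"
    unfolding sales_def using integrable_stock integrable_excess_after_low_prices[OF T_nonneg]
      integral_excess_after_low_prices[OF T_nonneg]
    by simp
  finally show ?thesis .
qed

lemma Vbar_le: "Vbar \<beta> y x \<le> T + 1 - holding / 2"
proof -
  have "0 < exp (- T)" "exp (- T) \<le> 1"
    using T_nonneg by auto
  then have geometric: "(\<lambda>t. exp (- T) * (1 - exp (- T)) ^ t) sums 1"
    using sums_mult[OF geometric_sums[of "1 - exp (- T)"], of "exp (- T)"] by simp
  have "(\<Sum>t. \<beta> ^ t * revenue t) \<le> (\<Sum>t. T * sales t + exp (- T) * (1 - exp (- T)) ^ t)"
  proof (rule suminf_le[OF _ summable_revenue])
    show "summable (\<lambda>t. T * sales t + exp (- T) * (1 - exp (- T)) ^ t)"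
      using summable_sales geometric by (intro summable_add summable_mult) (auto simp: sums_iff)
    fix t
    show "\<beta> ^ t * revenue t \<le> T * sales t + exp (- T) * (1 - exp (- T)) ^ t"
      using discount_le[OF revenue_nonneg] revenue_le by (rule order_trans)
  qed
  also have "\<dots> = T * (\<Sum>t. sales t) + 1"
    using summable_sales geometric
    by (subst suminf_add[symmetric]) (auto simp: sums_iff suminf_mult intro: summable_mult)
  also have "\<dots> \<le> T * 1 + 1"
    using suminf_sales_le x_le_1 T_nonneg by (intro add_right_mono mult_left_mono) auto
  finally show ?thesis
    using Vbar_eq by simp
qed

lemma stock_sq_le: "stock_sq t \<le> (1 - exp (- T)) ^ Suc t"
proof -
  have "stock_sq t \<le> (\<integral>\<omega>. (\<Prod>s<Suc t. indicator {..T} (\<omega> s)) \<partial>Prices)"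
    unfolding stock_sq_def
  proof (rule integral_mono[OF integrable_stock_sq integrable_prod_indicator_prices])
    fix \<omega> :: "nat \<Rightarrow> real"
    have "(stock \<omega> (Suc t))\<^sup>2 \<le> stock \<omega> (Suc t)"
      using stock_nonneg stock_le_1 by (simp add: power2_eq_square mult_left_le_one_le)
    then show "(stock \<omega> (Suc t))\<^sup>2 \<le> (\<Prod>s<Suc t. indicator {..T} (\<omega> s))"
      using stock_le_prod_indicator by (rule order_trans)
  qed simp
  also have "\<dots> = (1 - exp (- T)) ^ Suc t"
    using T_nonneg integral_prod_indicator_prices[of "{..T}" "Suc t"]
    by (simp add: measure_Pexp_atMost)
  finally show ?thesis .
qed

lemma holding_le_exp: "holding \<le> exp T"
proof -
  define q where "q = 1 - exp (- T)"
  have q: "0 \<le> q" "q < 1"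
    using T_nonneg by (auto simp: q_def)
  then have geometric: "(\<lambda>t. q ^ Suc t) sums (q * (1 / (1 - q)))"
    using sums_mult[OF geometric_sums[of q], of q] by simp
  have "holding \<le> q * (1 / (1 - q))"
    unfolding holding_def
  proof (rule sums_le[OF _ summable_sums[OF summable_stock_sq] geometric])
    fix t
    show "\<beta> ^ t * stock_sq t \<le> q ^ Suc t"
      using discount_le[OF stock_sq_nonneg] stock_sq_le unfolding q_def by (rule order_trans)
  qed
  also have "\<dots> \<le> exp T"
    using q by (simp add: q_def exp_minus field_simps)
  finally show ?thesis .
qed

end

section \<open>The SDP and MPC policies\<close>

lemma proj_nonpos: "z \<le> 0 \<Longrightarrow> proj 0 x z = 0"
  by (simp add: proj_def)

lemma measurable_pos [measurable]: "pos \<in> borel_measurable borel"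
  unfolding pos_def by measurable

lemma measurable_yS: "case_prod (yS \<beta> N ps) \<in> borel_measurable (borel \<Otimes>\<^sub>M borel)"
  unfolding yS_def proj_def case_prod_beta by measurable

lemma measurable_yM: "case_prod (yM \<beta> N ps) \<in> borel_measurable (borel \<Otimes>\<^sub>M borel)"
  unfolding yM_def proj_def case_prod_beta by measurable

lemma feasible_policy_yS: "feasible_policy (yS \<beta> N ps)"
  by (auto simp: feasible_policy_def yS_def proj_def)

lemma feasible_policy_yM: "feasible_policy (yM \<beta> N ps)"
  by (auto simp: feasible_policy_def yM_def proj_def)

definition pos_sum :: "nat \<Rightarrow> (nat \<Rightarrow> real) \<Rightarrow> real" where
  "pos_sum N ps = (\<Sum>i<N. pos (ps i))"

lemma pos_sum_nonneg: "0 \<le> pos_sum N ps"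
  unfolding pos_sum_def by (intro sum_nonneg) (simp add: pos_def)

lemma le_pos_sum: "i < N \<Longrightarrow> ps i \<le> pos_sum N ps"
  unfolding pos_sum_def
  using member_le_sum[of i "{..<N}" "\<lambda>i. pos (ps i)"] by (force simp: pos_def)

lemma yS_sells_off:
  assumes "\<beta> \<le> 1" "pos_sum N ps < p"
  shows "yS \<beta> N ps x p = 0"
proof -
  have "pos (ps i - p) = 0" if "i < N" for i
    using le_pos_sum[OF that, of ps] assms(2) by (simp add: pos_def)
  moreover have "0 \<le> (1 - \<beta>) * p"
    using assms pos_sum_nonneg[of N ps] by simp
  ultimately show ?thesis
    unfolding yS_def by (intro proj_nonpos) simp
qed

lemma yM_sells_off:
  assumes "\<beta> \<le> 1" "pos (1 / real N * (\<Sum>i<N. ps i)) < p"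
  shows "yM \<beta> N ps x p = 0"
proof -
  have "pos (1 / real N * (\<Sum>i<N. ps i) - p) = 0" "0 \<le> (1 - \<beta>) * p"
    using assms by (auto simp: pos_def)
  then show ?thesis
    unfolding yM_def by (intro proj_nonpos) simp
qed

lemma yS_keeps:
  assumes "1 \<le> N" "1 / 2 \<le> \<beta>" "\<beta> \<le> 1" "(1 - \<beta>) * a \<le> 1 / (4 * real N)" "a + 1 \<le> ps 0"
    and "1 / (4 * real N) \<le> x" "p \<le> a"
  shows "1 / (4 * real N) \<le> yS \<beta> N ps x p"
proof -
  have "1 \<le> pos (ps 0 - p)"
    using assms(5,7) by (simp add: pos_def)
  also have "\<dots> \<le> (\<Sum>i<N. pos (ps i - p))"
    using assms(1) by (intro member_le_sum) (auto simp: pos_def)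
  finally have "1 / 2 * (1 / N) \<le> \<beta> * (1 / N * (\<Sum>i<N. pos (ps i - p)))"
    using assms(2) by (intro mult_mono) (auto simp: divide_right_mono)
  moreover have "(1 - \<beta>) * p \<le> 1 / (4 * real N)"
  proof (cases "0 \<le> p")
    case True
    then have "(1 - \<beta>) * p \<le> (1 - \<beta>) * a"
      using assms(3,7) by (intro mult_left_mono) auto
    then show ?thesis
      using assms(4) by linarith
  next
    case False
    then have "(1 - \<beta>) * p \<le> 0"
      using assms(3) by (intro mult_nonneg_nonpos) auto
    moreover have "0 \<le> 1 / (4 * real N)"
      by simp
    ultimately show ?thesis
      by linarith
  qed
  ultimately have "1 / (4 * real N) \<le> \<beta> * (1 / N * (\<Sum>i<N. pos (ps i - p))) - (1 - \<beta>) * p"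
    by simp
  then show ?thesis
    using assms(6) by (simp add: yS_def proj_def)
qed

lemma sell_off_policy_yS:
  assumes "0 \<le> \<beta>" "\<beta> < 1"
  shows "sell_off_policy (yS \<beta> N ps) 1 \<beta> (pos_sum N ps)"
  using assms
  by unfold_locales (auto intro: feasible_policy_yS measurable_yS pos_sum_nonneg yS_sells_off)

lemma sell_off_policy_yM:
  assumes "0 \<le> \<beta>" "\<beta> < 1"
  shows "sell_off_policy (yM \<beta> N ps) 1 \<beta> (pos (1 / real N * (\<Sum>i<N. ps i)))"
  using assms
  by unfold_locales (auto intro: feasible_policy_yM measurable_yM yM_sells_off simp: pos_def)

abbreviation Samples :: "nat \<Rightarrow> (nat \<Rightarrow> real) measure" where
  "Samples N \<equiv> PiM {..<N} (\<lambda>_. Pexp)"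

lemma prob_space_Samples: "prob_space (Samples N)"
  by (intro prob_space_PiM prob_space_Pexp)

lemma measurable_sample [measurable (raw)]:
  "i \<in> I \<Longrightarrow> (\<lambda>ps. ps i) \<in> borel_measurable (PiM I (\<lambda>_. Pexp))"
  by (subst measurable_cong_sets[OF refl sets_Pexp, symmetric]) (rule measurable_component_singleton)

lemma measurable_pos_sum [measurable]: "(\<lambda>ps. pos_sum N ps) \<in> borel_measurable (Samples N)"
  unfolding pos_sum_def by measurable

lemma
  shows integrable_pos_sum: "integrable (Samples N) (pos_sum N)" and integral_pos_sum: "(\<integral>ps. pos_sum N ps \<partial>Samples N) = N"
proof -
  have "(\<integral>\<^sup>+ps. ennreal (pos_sum N ps) \<partial>Samples N) = (\<integral>\<^sup>+ps. (\<Sum>i<N. ennreal (pos (ps i))) \<partial>Samples N)"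
    unfolding pos_sum_def by (subst sum_ennreal) (auto simp: pos_def)
  also have "\<dots> = (\<Sum>i<N. \<integral>\<^sup>+ps. ennreal (pos (ps i)) \<partial>Samples N)"
    by (intro nn_integral_sum) auto
  also have "\<dots> = (\<Sum>i<N. \<integral>\<^sup>+x. ennreal (pos x) \<partial>Pexp)"
    by (intro sum.cong nn_integral_PiM_component prob_space_Pexp) auto
  finally have "(\<integral>\<^sup>+ps. ennreal (pos_sum N ps) \<partial>Samples N) = ennreal N"
    by (simp add: nn_integral_Pexp_pos ennreal_of_nat_eq_real_of_nat)
  then have "integrable (Samples N) (pos_sum N) \<and> (\<integral>ps. pos_sum N ps \<partial>Samples N) = N"
    using pos_sum_nonneg by (subst (asm) nn_integral_eq_integrable) auto
  then show "integrable (Samples N) (pos_sum N)" "(\<integral>ps. pos_sum N ps \<partial>Samples N) = N"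
    by auto
qed

lemma integrable_prod_exp_pos:
  assumes "2 \<le> N"
  shows "integrable (Samples N) (\<lambda>ps. \<Prod>i<N. exp (pos (ps i) / N))"
proof -
  have "(\<integral>\<^sup>+ps. ennreal (\<Prod>i<N. exp (pos (ps i) / N)) \<partial>Samples N)
      = (\<integral>\<^sup>+ps. (\<Prod>i<N. ennreal (exp (1 / N * pos (ps i)))) \<partial>Samples N)"
    by (simp add: prod_ennreal)
  also have "\<dots> = (\<Prod>i<N. \<integral>\<^sup>+x. ennreal (exp (1 / N * pos x)) \<partial>Pexp)"
    by (intro nn_integral_PiM_prod_components prob_space_Pexp) auto
  also have "\<dots> = (\<Prod>i<N. ennreal (1 / (1 - 1 / N)))"
    using assms by (intro prod.cong refl nn_integral_Pexp_exp_pos) auto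
  also have "\<dots> = ennreal ((1 / (1 - 1 / N)) ^ N)"
    using assms by (simp add: ennreal_power)
  finally have "(\<integral>\<^sup>+ps. ennreal (\<Prod>i<N. exp (pos (ps i) / N)) \<partial>Samples N)
      = ennreal ((1 / (1 - 1 / N)) ^ N)" .
  moreover have "0 \<le> 1 / (1 - 1 / real N)"
    using assms by simp
  ultimately show ?thesis
    by (subst (asm) nn_integral_eq_integrable) (auto intro!: AE_I2 prod_nonneg)
qed

lemma Vbar_yM_bounds:
  assumes "1 \<le> N" "0 \<le> \<beta>" "\<beta> < 1"
  shows "Vbar \<beta> (yM \<beta> N ps) 1 \<le> pos_sum N ps + 1"
    and "- (\<Prod>i<N. exp (pos (ps i) / N)) / 2 \<le> Vbar \<beta> (yM \<beta> N ps) 1"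
proof -
  define T where "T = pos (1 / real N * (\<Sum>i<N. ps i))"
  interpret sell_off_policy "yM \<beta> N ps" 1 \<beta> T
    unfolding T_def using assms(2,3) by (rule sell_off_policy_yM)
  have "1 / real N * (\<Sum>i<N. ps i) \<le> pos_sum N ps / N"
    unfolding pos_sum_def by (simp add: divide_right_mono sum_mono pos_def)
  then have T_le: "T \<le> pos_sum N ps / N"
    using pos_sum_nonneg[of N ps] by (simp add: T_def pos_def)
  also have "\<dots> \<le> pos_sum N ps"
    using assms(1) pos_sum_nonneg[of N ps] by (simp add: divide_le_eq mult_le_cancel_left1)
  finally show "Vbar \<beta> (yM \<beta> N ps) 1 \<le> pos_sum N ps + 1"
    using Vbar_le holding_nonneg by linarith
  have "holding \<le> exp (pos_sum N ps / N)"
    using holding_le_exp T_le by (meson exp_le_cancel_iff order_trans)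
  also have "\<dots> = (\<Prod>i<N. exp (pos (ps i) / N))"
    by (simp add: pos_sum_def sum_divide_distrib exp_sum)
  finally show "- (\<Prod>i<N. exp (pos (ps i) / N)) / 2 \<le> Vbar \<beta> (yM \<beta> N ps) 1"
    using Vbar_ge by linarith
qed

text \<open>No integrability of the MPC value is needed: a non-integrable function has integral 0.\<close>

lemma EVM_bounded:
  assumes "2 \<le> N"
  shows "\<exists>B. \<forall>\<^sub>F \<beta> in at_left 1. \<bar>EVM N \<beta>\<bar> \<le> B"
proof -
  define U where "U = (\<integral>ps. pos_sum N ps + 1 \<partial>Samples N)"
  define L where "L = (\<integral>ps. - (\<Prod>i<N. exp (pos (ps i) / N)) / 2 \<partial>Samples N)"
  have bound: "\<bar>EVM N \<beta>\<bar> \<le> \<bar>U\<bar> + \<bar>L\<bar>" if "0 < \<beta>" "\<beta> < 1" for \<beta>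
  proof (cases "integrable (Samples N) (\<lambda>ps. Vbar \<beta> (yM \<beta> N ps) 1)")
    case True
    interpret prob_space "Samples N" by (rule prob_space_Samples)
    have "EVM N \<beta> \<le> U"
      unfolding EVM_def U_def using True integrable_pos_sum Vbar_yM_bounds(1) assms that
      by (intro integral_mono) auto
    moreover have "L \<le> EVM N \<beta>"
      unfolding EVM_def L_def using True integrable_prod_exp_pos[OF assms] Vbar_yM_bounds(2) assms that
      by (intro integral_mono) auto
    ultimately show ?thesis
      by linarith
  qed (simp add: EVM_def not_integrable_integral_eq)
  have "\<forall>\<^sub>F \<beta> in at_left 1. \<beta> \<in> {0::real<..<1}"
    by (rule eventually_at_left_real) simp
  then have "\<forall>\<^sub>F \<beta> in at_left 1. \<bar>EVM N \<beta>\<bar> \<le> \<bar>U\<bar> + \<bar>L\<bar>"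
    by eventually_elim (use bound in auto)
  then show ?thesis
    by blast
qed

lemma Vbar_yS_bounds:
  assumes "0 \<le> \<beta>" "\<beta> < 1"
  shows "- (1 / (1 - \<beta>)) \<le> Vbar \<beta> (yS \<beta> N ps) 1"
    and "Vbar \<beta> (yS \<beta> N ps) 1 \<le> pos_sum N ps + 1"
proof -
  interpret sell_off_policy "yS \<beta> N ps" 1 \<beta> "pos_sum N ps"
    using assms by (rule sell_off_policy_yS)
  show "- (1 / (1 - \<beta>)) \<le> Vbar \<beta> (yS \<beta> N ps) 1"
    using Vbar_ge holding_le holding_nonneg by linarith
  show "Vbar \<beta> (yS \<beta> N ps) 1 \<le> pos_sum N ps + 1"
    using Vbar_le holding_nonneg by linarith
qed

lemma Vbar_yS_le:
  assumes "1 \<le> N" "1 / 2 \<le> \<beta>" "\<beta> < 1" "(1 - \<beta>) * L \<le> 1 / (4 * real N)" "1 - \<beta> \<le> exp (- L)"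
  shows "Vbar \<beta> (yS \<beta> N ps) 1
    \<le> pos_sum N ps + 1 - exp (ps 0) * indicator {2<..L} (ps 0) / (128 * exp 1 * (real N)\<^sup>2)"
proof -
  interpret sell_off_policy "yS \<beta> N ps" 1 \<beta> "pos_sum N ps"
    using assms(2,3) by (intro sell_off_policy_yS) auto
  have "exp (ps 0) * indicator {2<..L} (ps 0) / (64 * exp 1 * (real N)\<^sup>2) \<le> holding"
  proof (cases "ps 0 \<in> {2<..L}")
    case True
    define c where "c = 1 / (4 * real N)"
    have "c\<^sup>2 * exp (ps 0 - 1) / 4 \<le> holding"
    proof (rule holding_ge_exp)
      show "0 \<le> c" "c \<le> 1"
        using assms(1) by (auto simp: c_def)
      show "1 \<le> ps 0 - 1"
        using True by simp
      have "exp (- L) \<le> exp (- (ps 0 - 1))"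
        using True by simp
      then show "1 - \<beta> \<le> exp (- (ps 0 - 1))"
        using assms(5) by linarith
      fix x' p
      assume "c \<le> x'" "p \<le> ps 0 - 1"
      have "(1 - \<beta>) * (ps 0 - 1) \<le> (1 - \<beta>) * L"
        using True assms(3) by (intro mult_left_mono) auto
      then have "(1 - \<beta>) * (ps 0 - 1) \<le> 1 / (4 * real N)"
        using assms(4) by linarith
      then show "c \<le> yS \<beta> N ps x' p"
        unfolding c_def using assms(1-3) \<open>c \<le> x'\<close> \<open>p \<le> ps 0 - 1\<close>
        by (intro yS_keeps) (auto simp: c_def)
    qed
    then show ?thesis
      using True assms(1) by (simp add: c_def exp_diff power2_eq_square field_simps)
  qed (simp add: holding_nonneg)
  then show ?thesis
    using Vbar_le by simp
qed

lemma measurable_Vbar_yS: "(\<lambda>ps. Vbar \<beta> (yS \<beta> N ps) 1) \<in> borel_measurable (Samples N)"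
proof -
  interpret Prices: prob_space Prices
    by (rule prob_space_Prices)
  have sample: "(\<lambda>z. fst z i) \<in> borel_measurable (Samples N \<Otimes>\<^sub>M Prices)" if "i < N" for i
    using measurable_compose[OF measurable_fst measurable_sample[of i "{..<N}"]] that
    by (simp add: comp_def)
  have yS_measurable: "(\<lambda>z. yS \<beta> N (fst z) (X z) (P z)) \<in> borel_measurable (Samples N \<Otimes>\<^sub>M Prices)"
    if [measurable]: "X \<in> borel_measurable (Samples N \<Otimes>\<^sub>M Prices)"
      "P \<in> borel_measurable (Samples N \<Otimes>\<^sub>M Prices)" for X P
  proof -
    have [measurable]: "(\<lambda>z. \<Sum>i<N. pos (fst z i - P z)) \<in> borel_measurable (Samples N \<Otimes>\<^sub>M Prices)"
      using sample by (intro borel_measurable_sum) measurable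
    show ?thesis
      unfolding yS_def proj_def by measurable
  qed
  have [measurable]: "(\<lambda>z. traj (yS \<beta> N (fst z)) 1 (snd z) t) \<in> borel_measurable (Samples N \<Otimes>\<^sub>M Prices)"
    for t
  proof (induction t)
    case (Suc t)
    then show ?case
      unfolding traj.simps(2) by (rule yS_measurable) measurable
  qed simp
  have "(\<lambda>z. \<Sum>t. \<beta> ^ t * (snd z t * (traj (yS \<beta> N (fst z)) 1 (snd z) t - traj (yS \<beta> N (fst z)) 1 (snd z) (Suc t))
      - 1/2 * (traj (yS \<beta> N (fst z)) 1 (snd z) (Suc t))\<^sup>2)) \<in> borel_measurable (Samples N \<Otimes>\<^sub>M Prices)"
    by measurable
  then show ?thesis
    unfolding Vbar_def by (intro Prices.borel_measurable_lebesgue_integral) (simp add: split_beta')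
qed

lemma integrable_Vbar_yS:
  assumes "0 \<le> \<beta>" "\<beta> < 1"
  shows "integrable (Samples N) (\<lambda>ps. Vbar \<beta> (yS \<beta> N ps) 1)"
proof (rule Bochner_Integration.integrable_bound[OF _ measurable_Vbar_yS])
  interpret prob_space "Samples N"
    by (rule prob_space_Samples)
  show "integrable (Samples N) (\<lambda>ps. pos_sum N ps + (1 + 1 / (1 - \<beta>)))"
    using integrable_pos_sum by simp
  show "AE ps in Samples N. norm (Vbar \<beta> (yS \<beta> N ps) 1) \<le> norm (pos_sum N ps + (1 + 1 / (1 - \<beta>)))"
  proof (rule AE_I2)
    fix ps :: "nat \<Rightarrow> real"
    have "0 \<le> 1 / (1 - \<beta>)"
      using assms(2) by simp
    then show "norm (Vbar \<beta> (yS \<beta> N ps) 1) \<le> norm (pos_sum N ps + (1 + 1 / (1 - \<beta>)))"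
      using Vbar_yS_bounds[OF assms, of N ps] pos_sum_nonneg[of N ps] unfolding real_norm_def
      by linarith
  qed
qed

lemma
  assumes "1 \<le> N" "0 \<le> a" "a \<le> b"
  shows integrable_exp_indicator_sample: "integrable (Samples N) (\<lambda>ps. exp (ps 0) * indicator {a<..b} (ps 0))"
    and integral_exp_indicator_sample: "(\<integral>ps. exp (ps 0) * indicator {a<..b} (ps 0) \<partial>Samples N) = b - a"
proof -
  have "(\<integral>\<^sup>+ps. ennreal (exp (ps 0) * indicator {a<..b} (ps 0)) \<partial>Samples N)
      = (\<integral>\<^sup>+x. ennreal (exp x * indicator {a<..b} x) \<partial>Pexp)"
    using assms(1) by (intro nn_integral_PiM_component prob_space_Pexp) auto
  also have "\<dots> = ennreal (b - a)"
    using assms(2,3) by (rule nn_integral_Pexp_exp_indicator)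
  finally have "integrable (Samples N) (\<lambda>ps. exp (ps 0) * indicator {a<..b} (ps 0))
      \<and> (\<integral>ps. exp (ps 0) * indicator {a<..b} (ps 0) \<partial>Samples N) = b - a"
    using assms by (subst (asm) nn_integral_eq_integrable) auto
  then show "integrable (Samples N) (\<lambda>ps. exp (ps 0) * indicator {a<..b} (ps 0))"
    and "(\<integral>ps. exp (ps 0) * indicator {a<..b} (ps 0) \<partial>Samples N) = b - a"
    by auto
qed

lemma EVS_le:
  assumes "1 \<le> N" "1 / 2 \<le> \<beta>" "\<beta> < 1" "2 \<le> L" "(1 - \<beta>) * L \<le> 1 / (4 * real N)" "1 - \<beta> \<le> exp (- L)"
  shows "EVS N \<beta> \<le> real N + 1 - (L - 2) / (128 * exp 1 * (real N)\<^sup>2)"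
proof -
  interpret prob_space "Samples N"
    by (rule prob_space_Samples)
  define K where "K = 128 * exp 1 * (real N)\<^sup>2"
  let ?G = "\<lambda>ps. exp (ps 0) * indicator {2<..L} (ps 0) / K"
  have G: "integrable (Samples N) ?G" "(\<integral>ps. ?G ps \<partial>Samples N) = (L - 2) / K"
    using integrable_exp_indicator_sample[OF assms(1) _ assms(4)]
      integral_exp_indicator_sample[OF assms(1) _ assms(4)] by auto
  have "integrable (Samples N) (\<lambda>ps. Vbar \<beta> (yS \<beta> N ps) 1)"
    using assms(2,3) by (intro integrable_Vbar_yS) auto
  then have "EVS N \<beta> \<le> (\<integral>ps. pos_sum N ps + 1 - ?G ps \<partial>Samples N)"
    unfolding EVS_def using integrable_pos_sum G(1) Vbar_yS_le[OF assms(1-3,5,6)]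
    by (intro integral_mono) (auto simp: K_def)
  also have "\<dots> = real N + 1 - (L - 2) / K"
    using integrable_pos_sum integral_pos_sum G by (simp add: prob_space)
  finally show ?thesis
    by (simp add: K_def)
qed

lemma EVS_eventually_less:
  assumes "1 \<le> N"
  shows "\<forall>\<^sub>F \<beta> in at_left 1. EVS N \<beta> < B"
proof -
  define K where "K = 128 * exp 1 * (real N)\<^sup>2"
  define L where "L = max 2 (2 + K * (real N + 2 - B))"
  have "K > 0"
    using assms by (simp add: K_def)
  then have "real N + 2 - B \<le> (L - 2) / K"
    by (simp add: L_def field_simps)
  then have B: "real N + 1 - (L - 2) / K < B"
    by linarith
  define b where "b = max (1 / 2) (max (1 - 1 / (4 * real N * L)) (1 - exp (- L)))"
  have "b < 1"
    using assms by (simp add: b_def L_def)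
  have "EVS N \<beta> < B" if "b < \<beta>" "\<beta> < 1" for \<beta>
  proof -
    have "1 - \<beta> \<le> 1 / (4 * real N * L)"
      using that by (simp add: b_def)
    then have "(1 - \<beta>) * L \<le> 1 / (4 * real N * L) * L"
      using L_def by (intro mult_right_mono) auto
    then have "(1 - \<beta>) * L \<le> 1 / (4 * real N)"
      by (simp add: L_def)
    then have "EVS N \<beta> \<le> real N + 1 - (L - 2) / K"
      unfolding K_def using that assms by (intro EVS_le) (auto simp: b_def L_def)
    then show ?thesis
      using B by linarith
  qed
  then show ?thesis
    using eventually_at_left_real[OF \<open>b < 1\<close>] by (rule eventually_mono[rotated]) auto
qed

theorem proposition4:
  fixes N :: nat
  assumes "N \<ge> 2"
  shows "(\<forall>B::real. \<forall>\<^sub>F \<beta> in at_left 1. EVS N \<beta> < B)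
       \<and> (\<exists>B::real. \<forall>\<^sub>F \<beta> in at_left 1. \<bar>EVM N \<beta>\<bar> \<le> B)"
  using EVS_eventually_less EVM_bounded assms by auto

end
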